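(* Given $0<\epsilon<1/2$, there exists $C_1=C_1(\epsilon)>0$ such that for every $n$, every $0\le\eta<1/2$ and every $\mathbf{p},\mathbf{p}'\in[\epsilon,1-\epsilon]^n$ with $|p_i-p_i'|\ge\epsilon$ for all $i$, if $\bm\beta^*=(\beta_0,\dots,\beta_n)$ is the risk-minimizing linear solution of $(\mathbf{X},Y)$ for $(\mathbf{X},Y,Z)\sim\mathcal{D}^\eta_{\mathbf{p},\mathbf{p}'}$ and $\hat Y=\beta_0+\sum_{i=1}^n\beta_iX_i$, then $$\mathbb{P}_{(\mathbf{X},Y,Z)\sim\mathcal{D}^\eta_{\mathbf{p},\mathbf{p}'}}\big[\hat YZ\le0\big]\le\exp(-C_1n).$$
   Context: For $\mathbf{q}\in[0,1]^n$, $\mathcal{B}_{\mathbf{q}}$ is the law of independent $X_i\in\{-1,1\}$ with $\mathbb{P}[X_i=1]=q_i$. The toy distribution $\mathcal{D}^{\eta}_{\mathbf{p},\mathbf{p}'}$: sample $Z$ uniformly from $\{-1,1\}$; if $Z=1$ sample $\mathbf{X}\sim\mathcal{B}_{\mathbf{p}}$, else $\mathbf{X}\sim\mathcal{B}_{\mathbf{p}'}$; set $Y=Z$ with probability $1-\eta$ and $Y=-Z$ with probability $\eta$. The risk-minimizing linear solution is $\bm\beta^*=\arg\min_{\bm\beta}\mathbb{E}(\beta_0+\sum_i\beta_iX_i-Y)^2$. *)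

theory Defs
  imports "HOL-Analysis.Analysis"
begin

definition sign_vectors :: "nat \<Rightarrow> (nat \<Rightarrow> real) set" where
  "sign_vectors n = PiE {1..n} (\<lambda>_. {-1, 1})"

definition bern_mass :: "(nat \<Rightarrow> real) \<Rightarrow> nat \<Rightarrow> (nat \<Rightarrow> real) \<Rightarrow> real" where
  "bern_mass q n x = (\<Prod>i\<in>{1..n}. if x i = 1 then q i else 1 - q i)"

definition toy_mass :: "real \<Rightarrow> (nat \<Rightarrow> real) \<Rightarrow> (nat \<Rightarrow> real) \<Rightarrow> nat
    \<Rightarrow> (nat \<Rightarrow> real) \<Rightarrow> real \<Rightarrow> real \<Rightarrow> real" where
  "toy_mass \<eta> p p' n x y z =
     (1/2) * (if z = 1 then bern_mass p n x else bern_mass p' n x)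
           * (if y = z then 1 - \<eta> else \<eta>)"

definition lin_pred :: "(nat \<Rightarrow> real) \<Rightarrow> nat \<Rightarrow> (nat \<Rightarrow> real) \<Rightarrow> real" where
  "lin_pred \<beta> n x = \<beta> 0 + (\<Sum>i=1..n. \<beta> i * x i)"

definition toy_risk :: "real \<Rightarrow> (nat \<Rightarrow> real) \<Rightarrow> (nat \<Rightarrow> real) \<Rightarrow> nat \<Rightarrow> (nat \<Rightarrow> real) \<Rightarrow> real" where
  "toy_risk \<eta> p p' n \<beta> =
     (\<Sum>z\<in>{-1,1::real}. \<Sum>y\<in>{-1,1::real}. \<Sum>x\<in>sign_vectors n.
        toy_mass \<eta> p p' n x y z * (lin_pred \<beta> n x - y)^2)"

definition is_risk_minimizer :: "real \<Rightarrow> (nat \<Rightarrow> real) \<Rightarrow> (nat \<Rightarrow> real) \<Rightarrow> nat \<Rightarrow> (nat \<Rightarrow> real) \<Rightarrow> bool" where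
  "is_risk_minimizer \<eta> p p' n \<beta> \<longleftrightarrow> (\<forall>\<gamma>. toy_risk \<eta> p p' n \<beta> \<le> toy_risk \<eta> p p' n \<gamma>)"

definition toy_error_prob :: "real \<Rightarrow> (nat \<Rightarrow> real) \<Rightarrow> (nat \<Rightarrow> real) \<Rightarrow> nat \<Rightarrow> (nat \<Rightarrow> real) \<Rightarrow> real" where
  "toy_error_prob \<eta> p p' n \<beta> =
     (\<Sum>z\<in>{-1,1::real}. \<Sum>y\<in>{-1,1::real}. \<Sum>x\<in>sign_vectors n.
        if lin_pred \<beta> n x * z \<le> 0 then toy_mass \<eta> p p' n x y z else 0)"

end

theory Submission
  imports Defs
begin

text \<open>Write \<open>\<delta> = p - p'\<close> and \<open>D\<^sub>i\<close> for the average of the variances of \<open>X\<^sub>i\<close> under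
\<open>\<B>\<^sub>p\<close> and \<open>\<B>\<^sub>p\<^sub>'\<close>. Under the mixture, \<open>X\<close> has covariance \<open>D + \<delta>\<delta>\<^sup>T\<close> and \<open>Cov(X,Y) = (1-2\<eta>)\<delta>\<close>,
so by Sherman--Morrison the risk minimiser predicts a positive multiple of the discriminant
score \<open>S(x) = \<Sum>\<^sub>i w\<^sub>i (x\<^sub>i - m\<^sub>i)\<close>, where \<open>w = D\<^sup>-\<^sup>1\<delta>\<close> and \<open>m\<close> is the midpoint of the two means;
every minimiser agrees with it on the support, its excess risk being the mean square of the
difference of the two predictions. An error thus means \<open>S \<le> 0\<close> under \<open>\<B>\<^sub>p\<close> or \<open>S \<ge> 0\<close> under \<open>\<B>\<^sub>p\<^sub>'\<close>. Under \<open>\<B>\<^sub>p\<close> the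
coordinate \<open>w\<^sub>i(X\<^sub>i - m\<^sub>i)\<close> has mean \<open>\<delta>\<^sub>i\<^sup>2/D\<^sub>i \<ge> \<epsilon>\<^sup>2\<close> and size at most \<open>1/\<epsilon>\<close>, so a Chernoff
bound with parameter \<open>\<epsilon>\<^sup>4/2\<close> gives a factor \<open>exp(-\<epsilon>\<^sup>6/4)\<close> per coordinate.\<close>

definition bern_factor :: "(nat \<Rightarrow> real) \<Rightarrow> nat \<Rightarrow> real \<Rightarrow> real" where
  "bern_factor q i v = (if v = 1 then q i else 1 - q i)"

lemma bern_mass_eq_prod: "bern_mass q n x = (\<Prod>i\<in>{1..n}. bern_factor q i (x i))"
  by (simp add: bern_mass_def bern_factor_def)

lemma finite_sign_vectors: "finite (sign_vectors n)"
  by (simp add: sign_vectors_def finite_PiE)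

lemma sign_vectors_values: "x \<in> sign_vectors n \<Longrightarrow> i \<in> {1..n} \<Longrightarrow> x i = -1 \<or> x i = 1"
  by (auto simp: sign_vectors_def PiE_def Pi_def)

lemma sum_sign_vectors_prod:
  fixes g :: "nat \<Rightarrow> real \<Rightarrow> real"
  shows "(\<Sum>x\<in>sign_vectors n. \<Prod>i\<in>{1..n}. g i (x i)) = (\<Prod>i\<in>{1..n}. g i 1 + g i (-1))"
proof -
  have "(\<Prod>i\<in>{1..n}. \<Sum>v\<in>{-1,1::real}. g i v) = (\<Sum>x\<in>sign_vectors n. \<Prod>i\<in>{1..n}. g i (x i))"
    unfolding sign_vectors_def by (rule prod_sum_PiE) auto
  then show ?thesis by (simp add: add.commute)
qed

lemma bern_expectation_prod:
  "(\<Sum>x\<in>sign_vectors n. bern_mass q n x * (\<Prod>i\<in>{1..n}. h i (x i)))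
     = (\<Prod>i\<in>{1..n}. q i * h i 1 + (1 - q i) * h i (-1))"
  unfolding bern_mass_eq_prod prod.distrib[symmetric]
  by (subst sum_sign_vectors_prod) (simp add: bern_factor_def)

lemma sum_bern_mass: "(\<Sum>x\<in>sign_vectors n. bern_mass q n x) = 1"
  using bern_expectation_prod[of q n "\<lambda>i v. 1"] by simp

lemma bern_mass_nonneg:
  assumes "\<forall>i\<in>{1..n}. 0 \<le> q i \<and> q i \<le> 1"
  shows "0 \<le> bern_mass q n x"
  unfolding bern_mass_def using assms by (intro prod_nonneg) auto

lemma bern_mass_pos:
  assumes "\<forall>i\<in>{1..n}. 0 < q i \<and> q i < 1"
  shows "0 < bern_mass q n x"
  unfolding bern_mass_def using assms by (intro prod_pos) auto

lemma bern_first_moment: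
  assumes "j \<in> {1..n}"
  shows "(\<Sum>x\<in>sign_vectors n. bern_mass q n x * x j) = 2 * q j - 1"
proof -
  have "(\<Prod>i\<in>{1..n}. if i = j then x i else 1) = x j" for x :: "nat \<Rightarrow> real"
    using assms by (simp add: prod.delta)
  then have "(\<Sum>x\<in>sign_vectors n. bern_mass q n x * x j)
      = (\<Prod>i\<in>{1..n}. q i + (1 - q i) * (if i = j then -1 else 1))"
    using bern_expectation_prod[of q n "\<lambda>i v. if i = j then v else 1"] by simp
  also have "\<dots> = (\<Prod>i\<in>{1..n}. if i = j then 2 * q j - 1 else 1)"
    by (rule prod.cong) auto
  finally show ?thesis
    using assms by (simp add: prod.delta)
qed

lemma bern_second_moment:
  assumes "i \<in> {1..n}" "j \<in> {1..n}"
  shows "(\<Sum>x\<in>sign_vectors n. bern_mass q n x * (x i * x j))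
     = (2 * q i - 1) * (2 * q j - 1) + (if i = j then 1 - (2 * q j - 1)^2 else 0)"
proof (cases "i = j")
  case True
  have "(\<Sum>x\<in>sign_vectors n. bern_mass q n x * (x i * x j)) = (\<Sum>x\<in>sign_vectors n. bern_mass q n x)"
    by (rule sum.cong) (use True sign_vectors_values[OF _ assms(2)] in force)+
  then show ?thesis
    using True sum_bern_mass by (simp add: power2_eq_square)
next
  case False
  have "(\<Prod>k\<in>{1..n}. (if k = i then x k else 1) * (if k = j then x k else 1)) = x i * x j"
    for x :: "nat \<Rightarrow> real"
    using assms by (simp add: prod.delta prod.distrib)
  then have "(\<Sum>x\<in>sign_vectors n. bern_mass q n x * (x i * x j))
     = (\<Prod>k\<in>{1..n}. q k + (1 - q k) * ((if k = i then -1 else 1) * (if k = j then -1 else 1)))"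
    using bern_expectation_prod[of q n "\<lambda>k v. (if k = i then v else 1) * (if k = j then v else 1)"]
    by simp
  also have "\<dots> = (\<Prod>k\<in>{1..n}. (if k = i then 2 * q i - 1 else 1) * (if k = j then 2 * q j - 1 else 1))"
    by (rule prod.cong) (use False in auto)
  also have "\<dots> = (2 * q i - 1) * (2 * q j - 1)"
    using assms by (simp add: prod.delta prod.distrib)
  finally show ?thesis
    using False by simp
qed

lemma bern_expectation_lin_pred:
  "(\<Sum>x\<in>sign_vectors n. bern_mass q n x * lin_pred b n x) = b 0 + (\<Sum>i=1..n. b i * (2 * q i - 1))"
proof -
  have "(\<Sum>x\<in>sign_vectors n. bern_mass q n x * lin_pred b n x)
     = (\<Sum>x\<in>sign_vectors n. b 0 * bern_mass q n x + (\<Sum>i=1..n. b i * (bern_mass q n x * x i)))"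
    by (rule sum.cong) (auto simp: lin_pred_def algebra_simps sum_distrib_left)
  also have "\<dots> = b 0 * (\<Sum>x\<in>sign_vectors n. bern_mass q n x)
      + (\<Sum>i=1..n. b i * (\<Sum>x\<in>sign_vectors n. bern_mass q n x * x i))"
    by (simp add: sum.distrib sum_distrib_left) (rule sum.swap)
  also have "\<dots> = b 0 + (\<Sum>i=1..n. b i * (2 * q i - 1))"
    by (simp add: sum_bern_mass bern_first_moment)
  finally show ?thesis .
qed

lemma bern_expectation_lin_pred_mult_coord:
  assumes "j \<in> {1..n}"
  shows "(\<Sum>x\<in>sign_vectors n. bern_mass q n x * (lin_pred b n x * x j))
    = b 0 * (2 * q j - 1) + (\<Sum>i=1..n. b i * ((2 * q i - 1) * (2 * q j - 1)))
      + b j * (1 - (2 * q j - 1)^2)"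
proof -
  have "(\<Sum>x\<in>sign_vectors n. bern_mass q n x * (lin_pred b n x * x j))
     = (\<Sum>x\<in>sign_vectors n. b 0 * (bern_mass q n x * x j)
          + (\<Sum>i=1..n. b i * (bern_mass q n x * (x i * x j))))"
    by (rule sum.cong) (auto simp: lin_pred_def algebra_simps sum_distrib_left sum_distrib_right)
  also have "\<dots> = b 0 * (\<Sum>x\<in>sign_vectors n. bern_mass q n x * x j)
      + (\<Sum>i=1..n. b i * (\<Sum>x\<in>sign_vectors n. bern_mass q n x * (x i * x j)))"
    by (simp add: sum.distrib sum_distrib_left) (rule sum.swap)
  also have "(\<Sum>i=1..n. b i * (\<Sum>x\<in>sign_vectors n. bern_mass q n x * (x i * x j)))
     = (\<Sum>i=1..n. b i * ((2 * q i - 1) * (2 * q j - 1))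
          + (if i = j then b j * (1 - (2 * q j - 1)^2) else 0))"
    by (rule sum.cong) (simp_all add: bern_second_moment[OF _ assms] distrib_left)
  also have "\<dots> = (\<Sum>i=1..n. b i * ((2 * q i - 1) * (2 * q j - 1))) + b j * (1 - (2 * q j - 1)^2)"
    using assms by (simp add: sum.distrib)
  finally show ?thesis
    using assms by (simp add: bern_first_moment)
qed

lemma sum_sum_sum_swap:
  "(\<Sum>z\<in>Z. \<Sum>y\<in>Y. \<Sum>x\<in>X. G x y z) = (\<Sum>x\<in>X. \<Sum>z\<in>Z. \<Sum>y\<in>Y. G x y z)"
  by (simp add: sum.swap[of _ Y X] sum.swap[of _ Z X])

lemma lin_pred_diff: "lin_pred b n x - lin_pred b' n x = lin_pred (\<lambda>i. b i - b' i) n x"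
  by (simp add: lin_pred_def sum_subtractf algebra_simps)

definition avg_var :: "(nat \<Rightarrow> real) \<Rightarrow> (nat \<Rightarrow> real) \<Rightarrow> nat \<Rightarrow> real" where
  "avg_var p p' i = (2 - (2 * p i - 1)^2 - (2 * p' i - 1)^2) / 2"

definition disc_weight :: "(nat \<Rightarrow> real) \<Rightarrow> (nat \<Rightarrow> real) \<Rightarrow> nat \<Rightarrow> real" where
  "disc_weight p p' i = (p i - p' i) / avg_var p p' i"

definition mid_mean :: "(nat \<Rightarrow> real) \<Rightarrow> (nat \<Rightarrow> real) \<Rightarrow> nat \<Rightarrow> real" where
  "mid_mean p p' i = p i + p' i - 1"

definition disc_score :: "(nat \<Rightarrow> real) \<Rightarrow> (nat \<Rightarrow> real) \<Rightarrow> nat \<Rightarrow> (nat \<Rightarrow> real) \<Rightarrow> real" where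
  "disc_score p p' n x = (\<Sum>i=1..n. disc_weight p p' i * (x i - mid_mean p p' i))"

definition separation :: "(nat \<Rightarrow> real) \<Rightarrow> (nat \<Rightarrow> real) \<Rightarrow> nat \<Rightarrow> real" where
  "separation p p' n = (\<Sum>i=1..n. (p i - p' i) * disc_weight p p' i)"

definition opt_scale :: "real \<Rightarrow> (nat \<Rightarrow> real) \<Rightarrow> (nat \<Rightarrow> real) \<Rightarrow> nat \<Rightarrow> real" where
  "opt_scale \<eta> p p' n = (1 - 2 * \<eta>) / (1 + separation p p' n)"

definition opt_coeffs :: "real \<Rightarrow> (nat \<Rightarrow> real) \<Rightarrow> (nat \<Rightarrow> real) \<Rightarrow> nat \<Rightarrow> nat \<Rightarrow> real" where
  "opt_coeffs \<eta> p p' n j =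
     (if j = 0 then - opt_scale \<eta> p p' n * (\<Sum>i=1..n. disc_weight p p' i * mid_mean p p' i)
      else opt_scale \<eta> p p' n * disc_weight p p' j)"

lemma avg_var_eq: "avg_var p p' i = 2 * (p i * (1 - p i)) + 2 * (p' i * (1 - p' i))"
  by (simp add: avg_var_def power2_eq_square field_simps)

lemma avg_var_pos:
  assumes "0 < p i" "p i < 1" "0 < p' i" "p' i < 1"
  shows "0 < avg_var p p' i"
  unfolding avg_var_eq using assms by (intro add_pos_pos mult_pos_pos) auto

lemma avg_var_le_one: "avg_var p p' i \<le> 1"
proof -
  have "avg_var p p' i = 1 - ((2 * p i - 1)^2 + (2 * p' i - 1)^2) / 2"
    by (simp add: avg_var_def field_simps)
  then show ?thesis
    by simp
qed

lemma avg_var_ge: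
  assumes "0 \<le> \<epsilon>" "\<epsilon> \<le> 1/2" "\<epsilon> \<le> p i" "p i \<le> 1 - \<epsilon>" "\<epsilon> \<le> p' i" "p' i \<le> 1 - \<epsilon>"
  shows "2 * \<epsilon> \<le> avg_var p p' i"
proof -
  have half: "\<epsilon> / 2 \<le> \<epsilon> * (1 - \<epsilon>)"
    using mult_left_mono[of "1/2" "1 - \<epsilon>" \<epsilon>] assms by simp
  have var_ge: "\<epsilon> * (1 - \<epsilon>) \<le> q * (1 - q)" if "\<epsilon> \<le> q" "q \<le> 1 - \<epsilon>" for q :: real
  proof -
    have "0 \<le> (q - \<epsilon>) * (1 - \<epsilon> - q)"
      using that by simp
    then show ?thesis
      by (simp add: algebra_simps)
  qed
  show ?thesis
    using half var_ge[OF assms(3,4)] var_ge[OF assms(5,6)] unfolding avg_var_eq by linarith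
qed

lemma separation_nonneg:
  assumes "\<forall>i\<in>{1..n}. 0 < avg_var p p' i"
  shows "0 \<le> separation p p' n"
  unfolding separation_def disc_weight_def
  using assms by (intro sum_nonneg) (auto simp: power2_eq_square[symmetric] intro: divide_nonneg_pos)

lemma disc_weight_swap: "disc_weight p' p i = - disc_weight p p' i"
proof -
  have "avg_var p' p i = avg_var p p' i" by (simp add: avg_var_def)
  then show ?thesis by (simp add: disc_weight_def minus_divide_left)
qed

lemma disc_score_swap: "disc_score p' p n x = - disc_score p p' n x"
proof -
  have "mid_mean p' p i = mid_mean p p' i" for i by (simp add: mid_mean_def)
  then show ?thesis
    by (simp add: disc_score_def disc_weight_swap[of p p'] sum_negf[symmetric])
qed

lemma sum_opt_coeffs:
  "(\<Sum>i=1..n. opt_coeffs \<eta> p p' n i * f i) = opt_scale \<eta> p p' n * (\<Sum>i=1..n. disc_weight p p' i * f i)"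
  by (simp add: sum_distrib_left opt_coeffs_def mult.assoc)

lemma lin_pred_opt_coeffs:
  "lin_pred (opt_coeffs \<eta> p p' n) n x = opt_scale \<eta> p p' n * disc_score p p' n x"
proof -
  have "disc_score p p' n x
      = (\<Sum>i=1..n. disc_weight p p' i * x i) - (\<Sum>i=1..n. disc_weight p p' i * mid_mean p p' i)"
    unfolding disc_score_def sum_subtractf[symmetric] by (simp add: right_diff_distrib)
  then show ?thesis
    unfolding lin_pred_def sum_opt_coeffs by (simp add: opt_coeffs_def right_diff_distrib)
qed

definition opt_residual :: "real \<Rightarrow> (nat \<Rightarrow> real) \<Rightarrow> (nat \<Rightarrow> real) \<Rightarrow> nat \<Rightarrow> (nat \<Rightarrow> real) \<Rightarrow> real" where
  "opt_residual \<eta> p p' n x =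
     bern_mass p n x * (lin_pred (opt_coeffs \<eta> p p' n) n x - (1 - 2 * \<eta>))
   + bern_mass p' n x * (lin_pred (opt_coeffs \<eta> p p' n) n x + (1 - 2 * \<eta>))"

lemma toy_mass_residual:
  "(\<Sum>z\<in>{-1,1::real}. \<Sum>y\<in>{-1,1::real}. toy_mass \<eta> p p' n x y z * (lin_pred (opt_coeffs \<eta> p p' n) n x - y))
     = opt_residual \<eta> p p' n x / 2"
  by (simp add: toy_mass_def opt_residual_def field_simps)

lemma sum_opt_residual: "(\<Sum>x\<in>sign_vectors n. opt_residual \<eta> p p' n x) = 0"
proof -
  define e where "e = 1 - 2 * \<eta>"
  have "(\<Sum>x\<in>sign_vectors n. opt_residual \<eta> p p' n x)
    = (\<Sum>x\<in>sign_vectors n. bern_mass p n x * lin_pred (opt_coeffs \<eta> p p' n) n x)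
      - e * (\<Sum>x\<in>sign_vectors n. bern_mass p n x)
      + (\<Sum>x\<in>sign_vectors n. bern_mass p' n x * lin_pred (opt_coeffs \<eta> p p' n) n x)
      + e * (\<Sum>x\<in>sign_vectors n. bern_mass p' n x)"
    by (simp add: opt_residual_def e_def sum.distrib sum_subtractf sum_distrib_left algebra_simps)
  also have "\<dots> = 2 * opt_coeffs \<eta> p p' n 0 + opt_scale \<eta> p p' n *
      ((\<Sum>i=1..n. disc_weight p p' i * (2 * p i - 1)) + (\<Sum>i=1..n. disc_weight p p' i * (2 * p' i - 1)))"
    unfolding bern_expectation_lin_pred sum_bern_mass sum_opt_coeffs by (simp add: distrib_left)
  also have "(\<Sum>i=1..n. disc_weight p p' i * (2 * p i - 1)) + (\<Sum>i=1..n. disc_weight p p' i * (2 * p' i - 1))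
     = 2 * (\<Sum>i=1..n. disc_weight p p' i * mid_mean p p' i)"
    by (simp add: sum.distrib[symmetric] sum_distrib_left mid_mean_def algebra_simps)
  finally show ?thesis
    by (simp add: opt_coeffs_def)
qed

lemma sum_opt_residual_mult_coord:
  assumes j: "j \<in> {1..n}" and var: "avg_var p p' j \<noteq> 0" and sep: "1 + separation p p' n \<noteq> 0"
  shows "(\<Sum>x\<in>sign_vectors n. opt_residual \<eta> p p' n x * x j) = 0"
proof -
  define e where "e = 1 - 2 * \<eta>"
  define L where "L = lin_pred (opt_coeffs \<eta> p p' n) n"
  define c where "c = opt_scale \<eta> p p' n"
  define w where "w = disc_weight p p'"
  define A where "A = (\<lambda>i. 2 * p i - 1)"
  define A' where "A' = (\<lambda>i. 2 * p' i - 1)"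
  have "(\<Sum>x\<in>sign_vectors n. opt_residual \<eta> p p' n x * x j)
    = (\<Sum>x\<in>sign_vectors n. bern_mass p n x * (L x * x j))
      - e * (\<Sum>x\<in>sign_vectors n. bern_mass p n x * x j)
      + (\<Sum>x\<in>sign_vectors n. bern_mass p' n x * (L x * x j))
      + e * (\<Sum>x\<in>sign_vectors n. bern_mass p' n x * x j)"
    by (simp add: opt_residual_def L_def e_def sum.distrib sum_subtractf sum_distrib_left algebra_simps)
  also have "\<dots> = opt_coeffs \<eta> p p' n 0 * (A j + A' j)
      + c * ((\<Sum>i=1..n. w i * (A i * A j)) + (\<Sum>i=1..n. w i * (A' i * A' j)))
      + c * w j * (2 - (A j)^2 - (A' j)^2) - e * (A j - A' j)"
    unfolding L_def bern_expectation_lin_pred_mult_coord[OF j] bern_first_moment[OF j] sum_opt_coeffs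
    using j by (simp add: c_def w_def A_def A'_def algebra_simps opt_coeffs_def)
  also have "opt_coeffs \<eta> p p' n 0 * (A j + A' j)
      + c * ((\<Sum>i=1..n. w i * (A i * A j)) + (\<Sum>i=1..n. w i * (A' i * A' j)))
     = c * (\<Sum>i=1..n. w i * (2 * (p i - p' i) * (p j - p' j)))"
  proof -
    have "opt_coeffs \<eta> p p' n 0 * (A j + A' j) = c * (\<Sum>i=1..n. - w i * mid_mean p p' i * (A j + A' j))"
      by (simp add: opt_coeffs_def c_def w_def sum_distrib_left sum_distrib_right sum_negf mult.assoc)
    moreover have "(\<Sum>i=1..n. - w i * mid_mean p p' i * (A j + A' j))
        + ((\<Sum>i=1..n. w i * (A i * A j)) + (\<Sum>i=1..n. w i * (A' i * A' j)))
       = (\<Sum>i=1..n. w i * (2 * (p i - p' i) * (p j - p' j)))"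
      by (simp add: sum.distrib[symmetric] A_def A'_def mid_mean_def algebra_simps)
    ultimately show ?thesis
      by (simp add: distrib_left[symmetric])
  qed
  also have "c * (\<Sum>i=1..n. w i * (2 * (p i - p' i) * (p j - p' j))) = c * 2 * (p j - p' j) * separation p p' n"
    by (simp add: separation_def w_def sum_distrib_left sum_distrib_right algebra_simps)
  also have "c * w j * (2 - (A j)^2 - (A' j)^2) = c * 2 * (p j - p' j)"
    using var by (simp add: w_def disc_weight_def A_def A'_def avg_var_def field_simps)
  also have "e * (A j - A' j) = c * (1 + separation p p' n) * 2 * (p j - p' j)"
  proof -
    have "c * (1 + separation p p' n) = e"
      using sep by (simp add: c_def opt_scale_def e_def)
    then show ?thesis
      by (simp add: A_def A'_def algebra_simps)
  qed
  finally show ?thesis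
    by (simp add: algebra_simps)
qed

lemma sum_opt_residual_mult_lin_pred:
  assumes var: "\<forall>i\<in>{1..n}. 0 < avg_var p p' i"
  shows "(\<Sum>x\<in>sign_vectors n. opt_residual \<eta> p p' n x * lin_pred g n x) = 0"
proof -
  have sep: "1 + separation p p' n \<noteq> 0"
    using separation_nonneg[OF var] by linarith
  have "(\<Sum>x\<in>sign_vectors n. opt_residual \<eta> p p' n x * lin_pred g n x)
      = g 0 * (\<Sum>x\<in>sign_vectors n. opt_residual \<eta> p p' n x)
        + (\<Sum>j=1..n. g j * (\<Sum>x\<in>sign_vectors n. opt_residual \<eta> p p' n x * x j))"
    by (simp add: lin_pred_def sum.distrib sum_distrib_left sum_distrib_right algebra_simps)
       (rule sum.swap)
  also have "\<dots> = 0"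
    using var by (simp add: sum_opt_residual sum_opt_residual_mult_coord[OF _ _ sep] less_imp_neq[symmetric])
  finally show ?thesis .
qed

lemma toy_risk_eq_opt_plus_sq:
  assumes "\<forall>i\<in>{1..n}. 0 < avg_var p p' i"
  shows "toy_risk \<eta> p p' n \<beta> = toy_risk \<eta> p p' n (opt_coeffs \<eta> p p' n)
     + (\<Sum>z\<in>{-1,1::real}. \<Sum>y\<in>{-1,1::real}. \<Sum>x\<in>sign_vectors n.
          toy_mass \<eta> p p' n x y z * (lin_pred \<beta> n x - lin_pred (opt_coeffs \<eta> p p' n) n x)^2)"
proof -
  define L where "L = lin_pred (opt_coeffs \<eta> p p' n) n"
  define D where "D = lin_pred (\<lambda>i. \<beta> i - opt_coeffs \<eta> p p' n i) n"
  define M where "M = toy_mass \<eta> p p' n"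
  have LD: "lin_pred \<beta> n x = L x + D x" for x
    using lin_pred_diff[of \<beta> n x "opt_coeffs \<eta> p p' n"] unfolding L_def D_def by simp
  have expand: "M x y z * (lin_pred \<beta> n x - y)^2
      = M x y z * (L x - y)^2 + 2 * (D x * (M x y z * (L x - y))) + M x y z * (D x)^2" for x y z
    unfolding LD by (simp add: power2_eq_square algebra_simps)
  have "(\<Sum>z\<in>{-1,1::real}. \<Sum>y\<in>{-1,1::real}. \<Sum>x\<in>sign_vectors n. D x * (M x y z * (L x - y)))
      = (\<Sum>x\<in>sign_vectors n. D x * (\<Sum>z\<in>{-1,1::real}. \<Sum>y\<in>{-1,1::real}. M x y z * (L x - y)))"
    unfolding sum_distrib_left by (subst sum_sum_sum_swap) (rule refl)
  also have "\<dots> = (\<Sum>x\<in>sign_vectors n. opt_residual \<eta> p p' n x * D x) / 2"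
    unfolding M_def L_def toy_mass_residual by (simp add: sum_divide_distrib mult.commute)
  also have "\<dots> = 0"
    using sum_opt_residual_mult_lin_pred[OF assms] unfolding D_def by simp
  finally have cross: "(\<Sum>z\<in>{-1,1::real}. \<Sum>y\<in>{-1,1::real}. \<Sum>x\<in>sign_vectors n.
      D x * (M x y z * (L x - y))) = 0" .
  have diff: "lin_pred \<beta> n x - L x = D x" for x
    using LD by simp
  show ?thesis
    unfolding toy_risk_def M_def[symmetric] L_def[symmetric] unfolding diff expand
    using cross by (simp add: sum.distrib sum_distrib_left[symmetric])
qed

lemma risk_minimizer_lin_pred_eq:
  assumes "0 \<le> \<eta>" "\<eta> < 1"
    and p: "\<forall>i\<in>{1..n}. 0 < p i \<and> p i < 1" and p': "\<forall>i\<in>{1..n}. 0 < p' i \<and> p' i < 1"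
    and min: "is_risk_minimizer \<eta> p p' n \<beta>"
    and x: "x \<in> sign_vectors n"
  shows "lin_pred \<beta> n x = lin_pred (opt_coeffs \<eta> p p' n) n x"
proof -
  define M where "M = toy_mass \<eta> p p' n"
  define E where "E x = (lin_pred \<beta> n x - lin_pred (opt_coeffs \<eta> p p' n) n x)^2" for x
  have "0 \<le> bern_mass p n x" "0 \<le> bern_mass p' n x" for x
    using p p' by (simp_all add: bern_mass_nonneg less_imp_le)
  then have M_nonneg: "0 \<le> M x y z" for x y z
    using assms(1,2) by (auto simp: M_def toy_mass_def)
  have inner_nonneg: "0 \<le> (\<Sum>x\<in>sign_vectors n. M x y z * E x)" for y z
    using M_nonneg by (intro sum_nonneg) (simp add: E_def)
  have "toy_risk \<eta> p p' n \<beta> \<le> toy_risk \<eta> p p' n (opt_coeffs \<eta> p p' n)"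
    using min unfolding is_risk_minimizer_def by blast
  then have "(\<Sum>z\<in>{-1,1::real}. \<Sum>y\<in>{-1,1::real}. \<Sum>x\<in>sign_vectors n. M x y z * E x) \<le> 0"
    using toy_risk_eq_opt_plus_sq[of n p p' \<eta> \<beta>] avg_var_pos p p' unfolding M_def E_def by force
  then have "(\<Sum>x\<in>sign_vectors n. M x 1 1 * E x) = 0"
    using inner_nonneg[of 1 1] inner_nonneg[of "-1" 1] inner_nonneg[of 1 "-1"] inner_nonneg[of "-1" "-1"]
    by simp
  then have "M x 1 1 * E x = 0"
    using M_nonneg finite_sign_vectors x by (subst (asm) sum_nonneg_eq_0_iff) (auto simp: E_def)
  moreover have "0 < M x 1 1"
    using bern_mass_pos[OF p] assms(2) by (simp add: M_def toy_mass_def)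
  ultimately show ?thesis
    by (simp add: E_def)
qed

lemma toy_error_prob_eq_score:
  assumes c: "0 < c" and pred: "\<And>x. x \<in> sign_vectors n \<Longrightarrow> lin_pred \<beta> n x = c * S x"
  shows "toy_error_prob \<eta> p p' n \<beta> =
      (\<Sum>x\<in>sign_vectors n. if S x \<le> 0 then bern_mass p n x else 0) / 2
    + (\<Sum>x\<in>sign_vectors n. if - S x \<le> 0 then bern_mass p' n x else 0) / 2"
proof -
  have "toy_error_prob \<eta> p p' n \<beta> = (\<Sum>x\<in>sign_vectors n.
      (if S x \<le> 0 then bern_mass p n x else 0) / 2 + (if - S x \<le> 0 then bern_mass p' n x else 0) / 2)"
    unfolding toy_error_prob_def
  proof (subst sum_sum_sum_swap, rule sum.cong)
    fix x assume x: "x \<in> sign_vectors n"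
    have "c * S x * 1 \<le> 0 \<longleftrightarrow> S x \<le> 0" "c * S x * -1 \<le> 0 \<longleftrightarrow> - S x \<le> 0"
      using c by (simp_all add: mult_le_0_iff zero_le_mult_iff)
    then show "(\<Sum>z\<in>{-1,1::real}. \<Sum>y\<in>{-1,1::real}.
        if lin_pred \<beta> n x * z \<le> 0 then toy_mass \<eta> p p' n x y z else 0)
      = (if S x \<le> 0 then bern_mass p n x else 0) / 2 + (if - S x \<le> 0 then bern_mass p' n x else 0) / 2"
      unfolding pred[OF x] by (auto simp: toy_mass_def field_simps)
  qed simp
  then show ?thesis
    by (simp add: sum.distrib sum_divide_distrib)
qed

lemma bern_prob_sum_nonpos_le:
  fixes f :: "nat \<Rightarrow> real \<Rightarrow> real"
  assumes q: "\<forall>i\<in>{1..n}. 0 \<le> q i \<and> q i \<le> 1" and t: "0 \<le> t"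
    and mgf: "\<And>i. i \<in> {1..n} \<Longrightarrow> q i * exp (- t * f i 1) + (1 - q i) * exp (- t * f i (-1)) \<le> r"
  shows "(\<Sum>x\<in>sign_vectors n. if (\<Sum>i=1..n. f i (x i)) \<le> 0 then bern_mass q n x else 0) \<le> r ^ n"
proof -
  have "(\<Sum>x\<in>sign_vectors n. if (\<Sum>i=1..n. f i (x i)) \<le> 0 then bern_mass q n x else 0)
      \<le> (\<Sum>x\<in>sign_vectors n. bern_mass q n x * exp (- t * (\<Sum>i=1..n. f i (x i))))"
  proof (rule sum_mono)
    fix x
    have "(\<Sum>i=1..n. f i (x i)) \<le> 0 \<Longrightarrow> 1 \<le> exp (- t * (\<Sum>i=1..n. f i (x i)))"
      using t by (simp add: mult_le_0_iff)
    then show "(if (\<Sum>i=1..n. f i (x i)) \<le> 0 then bern_mass q n x else 0)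
        \<le> bern_mass q n x * exp (- t * (\<Sum>i=1..n. f i (x i)))"
      using bern_mass_nonneg[OF q, of x] by (auto intro: mult_le_cancel_left1[THEN iffD2])
  qed
  also have "\<dots> = (\<Sum>x\<in>sign_vectors n. bern_mass q n x * (\<Prod>i\<in>{1..n}. exp (- t * f i (x i))))"
    by (simp add: sum_distrib_left exp_sum)
  also have "\<dots> = (\<Prod>i\<in>{1..n}. q i * exp (- t * f i 1) + (1 - q i) * exp (- t * f i (-1)))"
    by (rule bern_expectation_prod)
  also have "\<dots> \<le> (\<Prod>i\<in>{1..n}. r)"
    using q mgf by (intro prod_mono) (auto intro!: add_nonneg_nonneg mult_nonneg_nonneg)
  finally show ?thesis
    by simp
qed

lemma exp_le_one_plus_plus_sq:
  fixes u :: real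
  assumes "\<bar>u\<bar> \<le> 1"
  shows "exp u \<le> 1 + u + u^2"
proof (cases "0 \<le> u")
  case True
  then show ?thesis using assms exp_bound by auto
next
  case False
  define s where "s = - u"
  have s: "0 < s" "s \<le> 1" using False assms s_def by auto
  have pos: "0 < 1 - s + s^2"
    using s by (simp add: power2_eq_square) (smt (verit) mult_pos_pos s(1))
  have "1 \<le> (1 - s + s^2) * (1 + s)"
    using s by (simp add: power2_eq_square algebra_simps)
  also have "\<dots> \<le> (1 - s + s^2) * exp s"
    using pos exp_ge_add_one_self[of s] by (intro mult_left_mono) auto
  finally have "1 / exp s \<le> 1 - s + s^2"
    by (simp add: divide_simps)
  then show ?thesis
    by (simp add: s_def exp_minus field_simps)
qed

lemma disc_coord_abs_le:
  assumes "0 < \<epsilon>" "\<epsilon> \<le> 1/2" "\<epsilon> \<le> p i" "p i \<le> 1 - \<epsilon>" "\<epsilon> \<le> p' i" "p' i \<le> 1 - \<epsilon>"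
    and v: "\<bar>v\<bar> \<le> 1"
  shows "\<bar>disc_weight p p' i * (v - mid_mean p p' i)\<bar> \<le> 1 / \<epsilon>"
proof -
  have var: "2 * \<epsilon> \<le> avg_var p p' i"
    using avg_var_ge assms by simp
  have "\<bar>disc_weight p p' i\<bar> = \<bar>p i - p' i\<bar> / avg_var p p' i"
    using var assms(1) by (simp add: disc_weight_def abs_divide)
  also have "\<dots> \<le> 1 / avg_var p p' i"
    using var assms by (intro divide_right_mono) auto
  also have "\<dots> \<le> 1 / (2 * \<epsilon>)"
    using var assms(1) by (simp add: frac_le)
  finally have "\<bar>disc_weight p p' i\<bar> * \<bar>v - mid_mean p p' i\<bar> \<le> 1 / (2 * \<epsilon>) * 2"
    using assms v by (intro mult_mono) (auto simp: mid_mean_def)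
  then show ?thesis
    using assms(1) by (simp add: abs_mult)
qed

lemma disc_coord_mean:
  assumes "avg_var p p' i \<noteq> 0"
  shows "p i * (disc_weight p p' i * (1 - mid_mean p p' i))
       + (1 - p i) * (disc_weight p p' i * (-1 - mid_mean p p' i)) = (p i - p' i)^2 / avg_var p p' i"
  using assms by (simp add: disc_weight_def mid_mean_def power2_eq_square field_simps)

lemma mean_exp_neg_le:
  fixes a t B f1 f2 :: real
  assumes a: "0 \<le> a" "a \<le> 1" and f: "\<bar>f1\<bar> \<le> B" "\<bar>f2\<bar> \<le> B" and t: "0 \<le> t" "t * B \<le> 1"
  shows "a * exp (- t * f1) + (1 - a) * exp (- t * f2) \<le> 1 - t * (a * f1 + (1 - a) * f2) + (t * B)^2"
proof -
  have exp_le: "exp (- t * f) \<le> 1 - t * f + (t * B)^2" if "\<bar>f\<bar> \<le> B" for f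
  proof -
    have "\<bar>- t * f\<bar> \<le> t * B"
      using that t by (simp add: abs_mult mult_left_mono)
    then have "exp (- t * f) \<le> 1 + - t * f + (- t * f)^2" and "(- t * f)^2 \<le> (t * B)^2"
      using t exp_le_one_plus_plus_sq[of "- t * f"] power_mono[of "\<bar>- t * f\<bar>" "t * B" 2] by auto
    then show ?thesis
      by simp
  qed
  have "a * exp (- t * f1) + (1 - a) * exp (- t * f2)
      \<le> a * (1 - t * f1 + (t * B)^2) + (1 - a) * (1 - t * f2 + (t * B)^2)"
    using a exp_le[OF f(1)] exp_le[OF f(2)] by (intro add_mono mult_left_mono) simp_all
  then show ?thesis
    by (simp add: algebra_simps)
qed

lemma disc_coord_mgf_le:
  assumes "0 < \<epsilon>" "\<epsilon> \<le> 1/2" "\<epsilon> \<le> p i" "p i \<le> 1 - \<epsilon>" "\<epsilon> \<le> p' i" "p' i \<le> 1 - \<epsilon>"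
    and sep: "\<epsilon> \<le> \<bar>p i - p' i\<bar>"
  shows "p i * exp (- (\<epsilon>^4 / 2) * (disc_weight p p' i * (1 - mid_mean p p' i)))
       + (1 - p i) * exp (- (\<epsilon>^4 / 2) * (disc_weight p p' i * (-1 - mid_mean p p' i)))
       \<le> exp (- (\<epsilon>^6 / 4))"
proof -
  define t where "t = \<epsilon>^4 / 2"
  have var: "0 < avg_var p p' i" "avg_var p p' i \<le> 1"
    using avg_var_ge[of \<epsilon> p i p'] avg_var_le_one assms by force+
  have "\<epsilon>^2 \<le> (p i - p' i)^2"
    using power_mono[OF sep, of 2] assms(1) by simp
  also have "\<dots> \<le> (p i - p' i)^2 / avg_var p p' i"
    using var by (simp add: le_divide_eq mult_left_le)
  finally have mean: "\<epsilon>^2 \<le> p i * (disc_weight p p' i * (1 - mid_mean p p' i))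
       + (1 - p i) * (disc_weight p p' i * (-1 - mid_mean p p' i))"
    using disc_coord_mean var(1) by simp
  have t: "0 \<le> t" "t * (1 / \<epsilon>) = \<epsilon>^3 / 2"
    using assms(1) by (simp_all add: t_def power_eq_if field_simps)
  have "p i * exp (- t * (disc_weight p p' i * (1 - mid_mean p p' i)))
       + (1 - p i) * exp (- t * (disc_weight p p' i * (-1 - mid_mean p p' i)))
       \<le> 1 - t * (p i * (disc_weight p p' i * (1 - mid_mean p p' i))
                  + (1 - p i) * (disc_weight p p' i * (-1 - mid_mean p p' i))) + (\<epsilon>^3 / 2)^2"
    by (rule mean_exp_neg_le[where B = "1 / \<epsilon>" and t = t, unfolded t(2)])
      (use disc_coord_abs_le[of \<epsilon> p i p' 1] disc_coord_abs_le[of \<epsilon> p i p' "-1"] power_le_one[of \<epsilon> 3] assms t in auto)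
  also have "\<dots> \<le> 1 - t * \<epsilon>^2 + (\<epsilon>^3 / 2)^2"
    using mult_left_mono[OF mean t(1)] by simp
  also have "\<dots> = 1 - \<epsilon>^6 / 4"
    by (simp add: t_def power2_eq_square power_eq_if field_simps)
  also have "\<dots> \<le> exp (- (\<epsilon>^6 / 4))"
    using exp_ge_add_one_self[of "- (\<epsilon>^6 / 4)"] by simp
  finally show ?thesis
    unfolding t_def .
qed

lemma disc_score_nonpos_prob_le:
  assumes "0 < \<epsilon>" "\<epsilon> \<le> 1/2"
    and box: "\<forall>i\<in>{1..n}. \<epsilon> \<le> p i \<and> p i \<le> 1 - \<epsilon> \<and> \<epsilon> \<le> p' i \<and> p' i \<le> 1 - \<epsilon> \<and> \<epsilon> \<le> \<bar>p i - p' i\<bar>"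
  shows "(\<Sum>x\<in>sign_vectors n. if disc_score p p' n x \<le> 0 then bern_mass p n x else 0)
       \<le> exp (- (\<epsilon>^6 / 4) * real n)"
proof -
  have "(\<Sum>x\<in>sign_vectors n. if disc_score p p' n x \<le> 0 then bern_mass p n x else 0)
       \<le> exp (- (\<epsilon>^6 / 4)) ^ n"
    unfolding disc_score_def
  proof (rule bern_prob_sum_nonpos_le[where t = "\<epsilon>^4 / 2"
        and f = "\<lambda>i v. disc_weight p p' i * (v - mid_mean p p' i)"])
    show "\<forall>i\<in>{1..n}. 0 \<le> p i \<and> p i \<le> 1"
      using box assms(1) by fastforce
    fix i assume "i \<in> {1..n}"
    then show "p i * exp (- (\<epsilon>^4 / 2) * (disc_weight p p' i * (1 - mid_mean p p' i)))
       + (1 - p i) * exp (- (\<epsilon>^4 / 2) * (disc_weight p p' i * (-1 - mid_mean p p' i)))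
       \<le> exp (- (\<epsilon>^6 / 4))"
      using box assms(1,2) by (intro disc_coord_mgf_le) auto
  qed simp
  then show ?thesis
    by (simp add: exp_of_nat_mult[symmetric] mult.commute)
qed

lemma risk_minimizer_error_prob_le:
  assumes "0 < \<epsilon>" "\<epsilon> < 1/2" "0 \<le> \<eta>" "\<eta> < 1/2"
    and box: "\<forall>i\<in>{1..n}. \<epsilon> \<le> p i \<and> p i \<le> 1 - \<epsilon> \<and> \<epsilon> \<le> p' i \<and> p' i \<le> 1 - \<epsilon> \<and> \<epsilon> \<le> \<bar>p i - p' i\<bar>"
    and min: "is_risk_minimizer \<eta> p p' n \<beta>"
  shows "toy_error_prob \<eta> p p' n \<beta> \<le> exp (- (\<epsilon>^6 / 4) * real n)"
proof -
  have p: "\<forall>i\<in>{1..n}. 0 < p i \<and> p i < 1" and p': "\<forall>i\<in>{1..n}. 0 < p' i \<and> p' i < 1"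
    using box assms(1) by force+
  have box': "\<forall>i\<in>{1..n}. \<epsilon> \<le> p' i \<and> p' i \<le> 1 - \<epsilon> \<and> \<epsilon> \<le> p i \<and> p i \<le> 1 - \<epsilon> \<and> \<epsilon> \<le> \<bar>p' i - p i\<bar>"
    using box by (auto simp: abs_minus_commute)
  have "0 \<le> separation p p' n"
    using p p' avg_var_pos by (intro separation_nonneg) auto
  then have scale: "0 < opt_scale \<eta> p p' n"
    using assms(4) by (simp add: opt_scale_def)
  have "toy_error_prob \<eta> p p' n \<beta> =
      (\<Sum>x\<in>sign_vectors n. if disc_score p p' n x \<le> 0 then bern_mass p n x else 0) / 2
    + (\<Sum>x\<in>sign_vectors n. if disc_score p' p n x \<le> 0 then bern_mass p' n x else 0) / 2"
    using toy_error_prob_eq_score[OF scale, of n \<beta> "disc_score p p' n"]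
      risk_minimizer_lin_pred_eq[OF assms(3) _ p p' min] assms(4)
    by (simp add: lin_pred_opt_coeffs disc_score_swap[of p p'])
  also have "\<dots> \<le> exp (- (\<epsilon>^6 / 4) * real n) / 2 + exp (- (\<epsilon>^6 / 4) * real n) / 2"
    using disc_score_nonpos_prob_le[OF assms(1) _ box] disc_score_nonpos_prob_le[OF assms(1) _ box'] assms(2)
    by (intro add_mono divide_right_mono) auto
  finally show ?thesis
    by simp
qed

theorem mainTheorem8:
  fixes \<epsilon> :: real
  assumes "0 < \<epsilon>" and "\<epsilon> < 1/2"
  shows "\<exists>C1>0. \<forall>(n::nat) (\<eta>::real) (p::nat \<Rightarrow> real) (p'::nat \<Rightarrow> real) (\<beta>::nat \<Rightarrow> real).
           0 \<le> \<eta> \<and> \<eta> < 1/2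
           \<and> (\<forall>i\<in>{1..n}. \<epsilon> \<le> p i \<and> p i \<le> 1 - \<epsilon> \<and> \<epsilon> \<le> p' i \<and> p' i \<le> 1 - \<epsilon>
                          \<and> \<bar>p i - p' i\<bar> \<ge> \<epsilon>)
           \<and> is_risk_minimizer \<eta> p p' n \<beta>
           \<longrightarrow> toy_error_prob \<eta> p p' n \<beta> \<le> exp (- C1 * real n)"
proof (intro exI[of _ "\<epsilon>^6 / 4"] conjI allI impI)
  show "0 < \<epsilon>^6 / 4"
    using assms by simp
qed (elim conjE, rule risk_minimizer_error_prob_le[OF assms]; assumption)

end
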